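(* Let $k\ge 4$ and let $G=(V,E)$ be the cycle graph of the cycle $C=(v_0,\ldots,v_{k-1})$, i.e. $V=V(C)$ and $E=\textnormal{ext}(C)$. Then the inequality $$\sum_{f\in\textnormal{int}(C)}x_f\ \ge\ |C|-3$$ is facet-defining for $\textnormal{conv}(X(G))$.
   Context: $V(C)=\{v_0,\ldots,v_{k-1}\}$, $|C|=k$, $\textnormal{ext}(C)=\{\{v_{i-1},v_i\}: i=1,\ldots,k-1\}\cup\{\{v_{k-1},v_0\}\}$, $\textnormal{int}(C)=\binom{V(C)}{2}\setminus\textnormal{ext}(C)$; so here $E^c=\textnormal{int}(C)$. For $x\in\{0,1\}^{E^c}$, $E(x)=\{f:x_f=1\}$ and $X(G)=\{x\in\{0,1\}^{E^c}:(V,E\cup E(x))\text{ is chordal}\}$; a graph is chordal if every cycle with at least four vertices has a chord. *)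

theory Defs
  imports "HOL-Analysis.Analysis" "HOL-Library.Function_Algebras"
begin

text \<open>We use it as the ambient space R^I, where points of
  R^{int(C)} are functions that vanish outside int(C).\<close>

instantiation "fun" :: (type, real_vector) real_vector
begin
definition scaleR_fun_def: "scaleR a f = (\<lambda>x. scaleR a (f x))"
instance
  by standard (auto simp: scaleR_fun_def fun_eq_iff plus_fun_def scaleR_add_right scaleR_add_left)
end

definition affdim :: "'a::real_vector set \<Rightarrow> int" where
  "affdim S = (if S = {} then -1
               else int (dim ((\<lambda>x. x - (SOME a. a \<in> S)) ` S)))"

definition facet_defining :: "'a::real_vector set \<Rightarrow> ('a \<Rightarrow> real) \<Rightarrow> real \<Rightarrow> bool" where
  "facet_defining P g b \<longleftrightarrow>
     (\<forall>x\<in>P. g x \<ge> b) \<and>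
     {x\<in>P. g x = b} \<noteq> {} \<and>
     affdim {x\<in>P. g x = b} = affdim P - 1"

definition is_cycle :: "'v set \<Rightarrow> 'v set set \<Rightarrow> 'v list \<Rightarrow> bool" where
  "is_cycle V E cs \<longleftrightarrow> length cs \<ge> 3 \<and> distinct cs \<and> set cs \<subseteq> V \<and>
     (\<forall>i < length cs. {cs ! i, cs ! ((i + 1) mod length cs)} \<in> E)"

definition has_chord :: "'v set set \<Rightarrow> 'v list \<Rightarrow> bool" where
  "has_chord E cs \<longleftrightarrow> (\<exists>i j. i < length cs \<and> j < length cs \<and> i \<noteq> j \<and>
     j \<noteq> (i + 1) mod length cs \<and> i \<noteq> (j + 1) mod length cs \<and>
     {cs ! i, cs ! j} \<in> E)"

definition chordal :: "'v set \<Rightarrow> 'v set set \<Rightarrow> bool" where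
  "chordal V E \<longleftrightarrow> (\<forall>cs. is_cycle V E cs \<and> length cs \<ge> 4 \<longrightarrow> has_chord E cs)"

text \<open>The cycle C = (v_0,...,v_{k-1}) with v_i = i.\<close>

definition cyc_V :: "nat \<Rightarrow> nat set" where
  "cyc_V k = {..<k}"

definition cyc_ext :: "nat \<Rightarrow> nat set set" where
  "cyc_ext k = {{i - 1, i} | i. 1 \<le> i \<and> i \<le> k - 1} \<union> {{k - 1, 0}}"

definition cyc_int :: "nat \<Rightarrow> nat set set" where
  "cyc_int k = {{i, j} | i j. i < k \<and> j < k \<and> i \<noteq> j} - cyc_ext k"

text \<open>X(G) for G = (V(C), ext(C)), with E^c = int(C): 0/1 vectors on int(C)
  (functions vanishing outside int(C)) whose support completes G to a chordal graph.\<close>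

definition X_cyc :: "nat \<Rightarrow> (nat set \<Rightarrow> real) set" where
  "X_cyc k = {x. (\<forall>f\<in>cyc_int k. x f = 0 \<or> x f = 1) \<and>
                 (\<forall>f. f \<notin> cyc_int k \<longrightarrow> x f = 0) \<and>
                 chordal (cyc_V k) (cyc_ext k \<union> {f \<in> cyc_int k. x f = 1})}"

end

theory Submission
  imports Defs
begin

text \<open>
  Validity: a cycle of length n in a chordal graph has at least n - 3 chords, since any chord
  splits it into two shorter cycles whose chords, together with the splitting chord, are distinct
  chords of the original cycle. Hence every chordal completion of C has at least |C| - 3 edges.

  The polytope is full-dimensional in the space of functions supported on int(C): the complete
  graph and the complete graph minus one chord f are chordal, and their difference is the unit
  vector of f.

  The triangulations of the polygon lie on the face. Rotating the fan at vertex 0 together with the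
  triangulation obtained from it by flipping one chord shows that, for every chord {a, v}, the
  difference of the unit vectors of {a, v} and of the ear chord {v - 1, v + 1} is a direction of
  the face. Ear chords of neighbouring vertices are linked through chords, so all differences of
  unit vectors are directions of the face, which therefore has dimension |int(C)| - 1.
\<close>

section \<open>Cycles and their chords\<close>

fun path_edges :: "'a list \<Rightarrow> 'a set set" where
  "path_edges (x # y # zs) = insert {x, y} (path_edges (y # zs))"
| "path_edges _ = {}"

definition cycle_edges :: "'a list \<Rightarrow> 'a set set" where
  "cycle_edges xs = path_edges (xs @ take 1 xs)"

definition chords :: "'a set set \<Rightarrow> 'a list \<Rightarrow> 'a set set" where
  "chords E xs = {e \<in> E. e \<subseteq> set xs} - cycle_edges xs"

lemma path_edges_append: "path_edges (xs @ y # ys) = path_edges (xs @ [y]) \<union> path_edges (y # ys)"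
  by (induction xs rule: path_edges.induct) auto

lemma path_edges_subset_set: "e \<in> path_edges xs \<Longrightarrow> e \<subseteq> set xs"
  by (induction xs rule: path_edges.induct) auto

lemma path_edges_conv_nth: "path_edges xs = (\<lambda>i. {xs ! i, xs ! Suc i}) ` {..<length xs - 1}"
proof (induction xs rule: path_edges.induct)
  case (1 x y zs)
  then show ?case by (simp add: lessThan_Suc_eq_insert_0 image_image)
qed auto

lemma cycle_edges_Cons: "cycle_edges (x # xs) = path_edges (x # xs @ [x])"
  by (simp add: cycle_edges_def)

lemma cycle_edges_conv_nth:
  "cycle_edges xs = (\<lambda>i. {xs ! i, xs ! ((i + 1) mod length xs)}) ` {..<length xs}"
proof (cases xs)
  case (Cons x ys)
  have wrap: "(xs @ [x]) ! Suc i = xs ! ((i + 1) mod length xs)" if "i < length xs" for i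
  proof (cases "Suc i = length xs")
    case True
    then show ?thesis using Cons by (simp add: nth_append)
  next
    case False
    then show ?thesis using that by (simp add: nth_append)
  qed
  have prefix: "(xs @ [x]) ! i = xs ! i" if "i < length xs" for i
    using that by (simp add: nth_append)
  have "xs @ take 1 xs = xs @ [x]" using Cons by simp
  then show ?thesis
    unfolding cycle_edges_def path_edges_conv_nth by (intro image_cong) (simp_all add: prefix wrap)
qed (simp add: cycle_edges_def)

lemma cycle_edges_rotate1: "cycle_edges (rotate1 xs) = cycle_edges xs"
proof (cases xs)
  case (Cons x ys)
  then show ?thesis
  proof (cases ys)
    case (Cons y zs)
    have "path_edges (y # zs @ [x, y]) = path_edges (y # zs @ [x]) \<union> {{x, y}}"
      using path_edges_append[of "y # zs" x "[y]"] by simp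
    then show ?thesis using \<open>xs = x # ys\<close> Cons by (auto simp: cycle_edges_def)
  qed (simp add: cycle_edges_def)
qed simp

lemma cycle_edges_rotate: "cycle_edges (rotate n xs) = cycle_edges xs"
  by (induction n) (simp_all add: cycle_edges_rotate1)

lemma chords_rotate: "chords E (rotate n xs) = chords E xs"
  by (simp add: chords_def cycle_edges_rotate)

lemma finite_chords: "finite (chords E xs)"
  by (rule finite_subset[of _ "Pow (set xs)"]) (auto simp: chords_def)

lemma is_cycle_iff:
  "is_cycle V E xs \<longleftrightarrow> 3 \<le> length xs \<and> distinct xs \<and> set xs \<subseteq> V \<and> cycle_edges xs \<subseteq> E"
  unfolding is_cycle_def cycle_edges_conv_nth by auto

lemma chords_nonempty_if_has_chord:
  assumes "distinct xs" "has_chord E xs"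
  shows "chords E xs \<noteq> {}"
proof -
  define n where "n = length xs"
  obtain i j where ij: "i < n" "j < n" "i \<noteq> j" "j \<noteq> (i + 1) mod n" "i \<noteq> (j + 1) mod n"
    and e: "{xs ! i, xs ! j} \<in> E"
    using assms(2) unfolding has_chord_def n_def by blast
  have "{xs ! i, xs ! j} \<notin> cycle_edges xs"
  proof
    assume "{xs ! i, xs ! j} \<in> cycle_edges xs"
    then obtain l where l: "l < n" "{xs ! i, xs ! j} = {xs ! l, xs ! ((l + 1) mod n)}"
      unfolding cycle_edges_conv_nth n_def by blast
    have m: "(l + 1) mod n < n" using l(1) by simp
    have inj: "a = b" if "a < n" "b < n" "xs ! a = xs ! b" for a b
      using that assms(1) nth_eq_iff_index_eq unfolding n_def by blast
    consider "xs ! i = xs ! l" "xs ! j = xs ! ((l + 1) mod n)"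
      | "xs ! i = xs ! ((l + 1) mod n)" "xs ! j = xs ! l"
      using l(2) by (auto simp: doubleton_eq_iff)
    then show False
    proof cases
      case 1
      then show False using inj[OF ij(1) l(1)] inj[OF ij(2) m] ij(4) by simp
    next
      case 2
      then show False using inj[OF ij(1) m] inj[OF ij(2) l(1)] ij(5) by simp
    qed
  qed
  moreover have "{xs ! i, xs ! j} \<subseteq> set xs" using ij(1,2) unfolding n_def by simp
  ultimately show ?thesis using e unfolding chords_def by blast
qed

lemma rotate_to_pair:
  assumes "u \<in> set xs" "w \<in> set xs" "u \<noteq> w"
  obtains n ys zs where "rotate n xs = u # ys @ w # zs"
proof -
  obtain as bs where xs: "xs = as @ u # bs" using split_list[OF assms(1)] by blast
  have "w \<in> set (bs @ as)" using assms(2,3) xs by auto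
  then obtain ys zs where "bs @ as = ys @ w # zs" using split_list[of w "bs @ as"] by blast
  then have "rotate (length as) xs = u # ys @ w # zs" using xs by (simp add: rotate_append)
  then show ?thesis by (rule that)
qed

lemma rotate_to_second_half: "rotate (Suc (length xs)) (u # xs @ w # ys) = w # ys @ u # xs"
  using rotate_append[of "u # xs" "w # ys"] by simp

lemma cycle_edges_split:
  "cycle_edges (u # xs @ w # ys) = path_edges (u # xs @ [w]) \<union> path_edges (w # ys @ [u])"
  using path_edges_append[of "u # xs" w "ys @ [u]"] by (simp add: cycle_edges_Cons)

lemma cycle_edges_close: "cycle_edges (u # xs @ [w]) = insert {u, w} (path_edges (u # xs @ [w]))"
  using cycle_edges_split[of u xs w "[]"] by (auto simp: insert_commute)

lemma doubleton_if_card_2_subset: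
  assumes "card e = 2" "e \<subseteq> {u, w}"
  shows "e = {u, w}"
proof -
  obtain a b where "e = {a, b}" "a \<noteq> b" using assms(1) card_2_iff by metis
  then show ?thesis using assms(2) by auto
qed

lemma set_subcycles_inter:
  assumes "distinct (u # xs @ w # ys)"
  shows "set (u # xs @ [w]) \<inter> set (w # ys @ [u]) = {u, w}"
proof -
  have "set xs \<inter> set ys = {}" "u \<notin> set xs" "u \<notin> set ys" "w \<notin> set xs" "w \<notin> set ys"
    using assms by auto
  then show ?thesis by auto
qed

lemma chords_subcycle:
  assumes dist: "distinct (u # xs @ w # ys)" and E2: "\<forall>e\<in>E. card e = 2"
  shows "chords E (u # xs @ [w]) \<subseteq> chords E (u # xs @ w # ys) - {{u, w}}"
proof
  fix f assume f: "f \<in> chords E (u # xs @ [w])"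
  then have fE: "f \<in> E" and f1: "f \<subseteq> set (u # xs @ [w])" and ne: "f \<noteq> {u, w}"
    and p1: "f \<notin> path_edges (u # xs @ [w])"
    unfolding chords_def cycle_edges_close by simp_all
  have p2: "f \<notin> path_edges (w # ys @ [u])"
  proof
    assume "f \<in> path_edges (w # ys @ [u])"
    then have "f \<subseteq> set (u # xs @ [w]) \<inter> set (w # ys @ [u])"
      using f1 path_edges_subset_set by (intro Int_greatest)
    also have "\<dots> = {u, w}" by (rule set_subcycles_inter[OF dist])
    finally have "f = {u, w}" by (intro doubleton_if_card_2_subset) (use E2 fE in blast)
    then show False using ne by simp
  qed
  have "f \<subseteq> set (u # xs @ w # ys)" using f1 by auto
  then show "f \<in> chords E (u # xs @ w # ys) - {{u, w}}"
    using fE ne p1 p2 unfolding chords_def cycle_edges_split by simp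
qed

lemma card_chords_split:
  assumes dist: "distinct (u # xs @ w # ys)" and E2: "\<forall>e\<in>E. card e = 2"
    and uw: "{u, w} \<in> chords E (u # xs @ w # ys)"
  shows "card (chords E (u # xs @ [w])) + card (chords E (w # ys @ [u])) + 1
           \<le> card (chords E (u # xs @ w # ys))"
proof -
  let ?C = "chords E (u # xs @ w # ys)"
  let ?C1 = "chords E (u # xs @ [w])" and ?C2 = "chords E (w # ys @ [u])"
  have C1: "?C1 \<subseteq> ?C - {{u, w}}" by (rule chords_subcycle[OF dist E2])
  have rot: "rotate (Suc (length xs)) (u # xs @ w # ys) = w # ys @ u # xs"
    by (rule rotate_to_second_half)
  have "distinct (w # ys @ u # xs)" using dist distinct_rotate rot by metis
  then have "?C2 \<subseteq> chords E (w # ys @ u # xs) - {{w, u}}" by (rule chords_subcycle[OF _ E2])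
  also have "chords E (w # ys @ u # xs) = ?C" using chords_rotate rot by metis
  finally have C2: "?C2 \<subseteq> ?C - {{u, w}}" by (simp add: insert_commute)
  have disj: "?C1 \<inter> ?C2 = {}"
  proof (rule equals0I)
    fix f assume f: "f \<in> ?C1 \<inter> ?C2"
    then have "f \<subseteq> {u, w}" using set_subcycles_inter[OF dist] unfolding chords_def by blast
    moreover have "card f = 2" using f E2 unfolding chords_def by blast
    ultimately have "f = {u, w}" by (intro doubleton_if_card_2_subset)
    then show False using f C1 by blast
  qed
  have "card ?C1 + card ?C2 = card (?C1 \<union> ?C2)"
    using disj by (simp add: card_Un_disjoint finite_chords)
  also have "\<dots> \<le> card (?C - {{u, w}})"
    using C1 C2 by (intro card_mono) (simp_all add: finite_chords)
  also have "\<dots> = card ?C - 1" using uw by (simp add: finite_chords)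
  finally have "card ?C1 + card ?C2 \<le> card ?C - 1" .
  moreover have "0 < card ?C" using uw finite_chords card_gt_0_iff by blast
  ultimately show ?thesis by linarith
qed

lemma subcycle_is_cycle:
  assumes "distinct (u # xs @ w # ys)" "cycle_edges (u # xs @ w # ys) \<subseteq> E" "{u, w} \<in> E"
  shows "distinct (u # xs @ [w])" "set (u # xs @ [w]) \<subseteq> set (u # xs @ w # ys)"
    and "cycle_edges (u # xs @ [w]) \<subseteq> E"
proof -
  show "distinct (u # xs @ [w])" using assms(1) by simp
  show "set (u # xs @ [w]) \<subseteq> set (u # xs @ w # ys)" by auto
  show "cycle_edges (u # xs @ [w]) \<subseteq> E"
    using assms(2,3) cycle_edges_split[of u xs w ys] unfolding cycle_edges_close by blast
qed

lemma split_at_chord: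
  assumes e: "e \<in> chords E cs" and card: "card e = 2"
  obtains n u xs w ys where "rotate n cs = u # xs @ w # ys" "e = {u, w}" "xs \<noteq> []" "ys \<noteq> []"
proof -
  obtain u w where uw: "e = {u, w}" "u \<noteq> w" using card by (meson card_2_iff)
  then have "u \<in> set cs" "w \<in> set cs" using e unfolding chords_def by auto
  then obtain n xs ys where rot: "rotate n cs = u # xs @ w # ys"
    using rotate_to_pair uw(2) by metis
  have "{u, w} \<in> chords E (u # xs @ w # ys)" using e uw(1) rot chords_rotate by metis
  then have "{u, w} \<notin> path_edges (u # xs @ [w])" "{u, w} \<notin> path_edges (w # ys @ [u])"
    unfolding chords_def cycle_edges_split by simp_all
  then have "xs \<noteq> []" "ys \<noteq> []" by (auto simp: insert_commute)
  then show ?thesis using that rot uw(1) by blast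
qed

lemma card_chords_ge:
  assumes chordal: "chordal V E" and E2: "\<forall>e\<in>E. card e = 2"
  shows "3 \<le> length cs \<Longrightarrow> distinct cs \<Longrightarrow> set cs \<subseteq> V \<Longrightarrow> cycle_edges cs \<subseteq> E \<Longrightarrow>
    length cs - 3 \<le> card (chords E cs)"
proof (induction "length cs" arbitrary: cs rule: less_induct)
  case less
  have half: "length xs - 1 \<le> card (chords E (u # xs @ [w]))"
    if rot: "rotate n cs = u # xs @ w # ys" and uw: "{u, w} \<in> E" and ne: "xs \<noteq> []" "ys \<noteq> []"
    for n u xs w ys
  proof -
    let ?cs = "u # xs @ w # ys"
    have dist: "distinct ?cs" using less.prems(2) rot distinct_rotate by metis
    have cyc: "cycle_edges ?cs \<subseteq> E" using less.prems(4) rot cycle_edges_rotate by metis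
    have "set ?cs \<subseteq> V" using less.prems(3) rot set_rotate by metis
    moreover have "length cs = length ?cs" using rot length_rotate by metis
    ultimately have "length (u # xs @ [w]) - 3 \<le> card (chords E (u # xs @ [w]))"
      using subcycle_is_cycle[OF dist cyc uw] ne by (intro less.hyps) (auto simp: Suc_le_eq)
    then show ?thesis by simp
  qed
  show ?case
  proof (cases "length cs = 3")
    case False
    then have "is_cycle V E cs" "4 \<le> length cs" using less.prems by (auto simp: is_cycle_iff)
    then obtain e where e: "e \<in> chords E cs"
      using chordal chords_nonempty_if_has_chord less.prems(2) unfolding chordal_def by blast
    moreover have "card e = 2" using e E2 unfolding chords_def by blast
    ultimately obtain n u xs w ys where rot: "rotate n cs = u # xs @ w # ys"
      and uw: "e = {u, w}" and ne: "xs \<noteq> []" "ys \<noteq> []"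
      by (rule split_at_chord)
    have ch: "{u, w} \<in> chords E (u # xs @ w # ys)" using e uw rot chords_rotate by metis
    then have uwE: "{u, w} \<in> E" "{w, u} \<in> E" unfolding chords_def by (simp_all add: insert_commute)
    have "rotate (Suc (length xs) + n) cs = rotate (Suc (length xs)) (u # xs @ w # ys)"
      by (simp only: rotate_rotate[symmetric] rot)
    also have "\<dots> = w # ys @ u # xs" by (rule rotate_to_second_half)
    finally have "length ys - 1 \<le> card (chords E (w # ys @ [u]))"
      by (rule half[OF _ uwE(2) ne(2) ne(1)])
    moreover have "length xs - 1 \<le> card (chords E (u # xs @ [w]))"
      by (rule half[OF rot uwE(1) ne])
    moreover have "distinct (u # xs @ w # ys)" using less.prems(2) distinct_rotate[of n cs] rot by simp
    then have "card (chords E (u # xs @ [w])) + card (chords E (w # ys @ [u])) + 1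
        \<le> card (chords E cs)"
      using card_chords_split[OF _ E2 ch] chords_rotate[of E n cs] rot by simp
    moreover have "length cs = length xs + length ys + 2" using length_rotate[of n cs] rot by simp
    moreover have "0 < length xs" "0 < length ys" using ne by simp_all
    ultimately show ?thesis by linarith
  qed simp
qed

section \<open>Sufficient conditions for chordality\<close>

lemma cyclic_neighbours:
  fixes p n :: nat
  assumes "p < n" "4 \<le> n"
  obtains q1 q2 where "q1 < n" "q2 < n" "(q1 + 1) mod n = p" "(p + 1) mod n = q2"
    "q1 \<noteq> q2" "q1 \<noteq> p" "q2 \<noteq> p" "(q2 + 1) mod n \<noteq> q1"
proof -
  define q1 where "q1 = (if p = 0 then n - 1 else p - 1)"
  define q2 where "q2 = (if p = n - 1 then 0 else p + 1)"
  have "(q2 + 1) mod n \<noteq> q1"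
  proof (cases "Suc (Suc p) < n")
    case False
    then consider "Suc (Suc p) = n" | "Suc p = n" using assms(1) by linarith
    then show ?thesis using assms unfolding q1_def q2_def by cases auto
  qed (use assms in \<open>auto simp: q1_def q2_def\<close>)
  then show ?thesis using assms by (intro that[of q1 q2]) (auto simp: q1_def q2_def)
qed

lemma chordal_if_perfect_elimination:
  fixes \<rho> :: "'a \<Rightarrow> nat"
  assumes simplicial: "\<And>v u w. v \<in> V \<Longrightarrow> u \<in> V \<Longrightarrow> w \<in> V \<Longrightarrow> {v, u} \<in> E \<Longrightarrow> {v, w} \<in> E \<Longrightarrow>
     u \<noteq> w \<Longrightarrow> u \<noteq> v \<Longrightarrow> w \<noteq> v \<Longrightarrow> \<rho> v \<le> \<rho> u \<Longrightarrow> \<rho> v \<le> \<rho> w \<Longrightarrow> {u, w} \<in> E"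
  shows "chordal V E"
  unfolding chordal_def
proof (intro allI impI, elim conjE)
  fix cs :: "'a list"
  assume cyc: "is_cycle V E cs" and len: "4 \<le> length cs"
  define n where "n = length cs"
  have dist: "distinct cs" and sub: "set cs \<subseteq> V"
    and edge: "\<And>i. i < n \<Longrightarrow> {cs ! i, cs ! ((i + 1) mod n)} \<in> E"
    using cyc unfolding is_cycle_def n_def by auto
  have n4: "4 \<le> n" using len n_def by simp
  \<comment> \<open>The two cycle neighbours of a vertex of least rank are joined by a chord.\<close>
  obtain p where p: "p < n" and pmin: "\<And>q. q < n \<Longrightarrow> \<rho> (cs ! p) \<le> \<rho> (cs ! q)"
    using ex_has_least_nat[of "\<lambda>q. q < n" 0 "\<lambda>q. \<rho> (cs ! q)"] n4 by auto
  obtain q1 q2 where q: "q1 < n" "q2 < n" "(q1 + 1) mod n = p" "(p + 1) mod n = q2"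
    "q1 \<noteq> q2" "q1 \<noteq> p" "q2 \<noteq> p" "(q2 + 1) mod n \<noteq> q1"
    using cyclic_neighbours[OF p n4] by blast
  have inj: "\<And>a b. a < n \<Longrightarrow> b < n \<Longrightarrow> cs ! a = cs ! b \<Longrightarrow> a = b"
    using dist n_def nth_eq_iff_index_eq by blast
  have inV: "\<And>a. a < n \<Longrightarrow> cs ! a \<in> V" using sub n_def by auto
  have "{cs ! p, cs ! q1} \<in> E" using edge[OF q(1)] q(3) by (simp add: insert_commute)
  moreover have "{cs ! p, cs ! q2} \<in> E" using edge[OF p] q(4) by simp
  ultimately have "{cs ! q1, cs ! q2} \<in> E"
    using simplicial[OF inV[OF p] inV[OF q(1)] inV[OF q(2)]] inj p q pmin by metis
  then show "has_chord E cs"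
    unfolding has_chord_def n_def[symmetric] using q by (intro exI[of _ q1] exI[of _ q2]) auto
qed

lemma chordal_image:
  assumes bij: "bij_betw h V W" and EV: "\<forall>e\<in>E. e \<subseteq> V" and chordal: "chordal V E"
  shows "chordal W ((`) h ` E)"
  unfolding chordal_def
proof (intro allI impI, elim conjE)
  fix cs assume cyc: "is_cycle W ((`) h ` E) cs" and len: "4 \<le> length cs"
  define g where "g = inv_into V h"
  have gh: "\<And>e. e \<in> E \<Longrightarrow> g ` h ` e = e"
    using bij EV unfolding g_def bij_betw_def by simp
  have hg: "\<And>y. y \<in> W \<Longrightarrow> h (g y) = y"
    unfolding g_def by (rule bij_betw_inv_into_right[OF bij])
  have g_bij: "bij_betw g W V" using bij unfolding g_def by (rule bij_betw_inv_into)
  have sub: "set cs \<subseteq> W" using cyc unfolding is_cycle_def by auto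
  have nth_W: "\<And>i. i < length cs \<Longrightarrow> cs ! i \<in> W" using sub by auto
  have pullback: "{g x, g y} \<in> E" if xy: "{x, y} \<in> (`) h ` E" for x y
  proof -
    obtain e where "e \<in> E" "{x, y} = h ` e" using xy by blast
    then show ?thesis using gh by (metis image_insert image_empty)
  qed
  have "is_cycle V E (map g cs)"
    unfolding is_cycle_def
  proof (intro conjI allI impI)
    show "3 \<le> length (map g cs)" "distinct (map g cs)" "set (map g cs) \<subseteq> V"
      using cyc g_bij sub unfolding is_cycle_def bij_betw_def
      by (auto simp: distinct_map inj_on_subset)
    fix i assume i: "i < length (map g cs)"
    then have "0 < length cs" by (cases cs) simp_all
    then have "(i + 1) mod length cs < length cs" by (rule mod_less_divisor)
    then show "{map g cs ! i, map g cs ! ((i + 1) mod length (map g cs))} \<in> E"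
      using i cyc pullback unfolding is_cycle_def by simp
  qed
  then have "has_chord E (map g cs)" using chordal len unfolding chordal_def by simp
  then obtain i j where ij: "i < length cs" "j < length cs" "i \<noteq> j"
    "j \<noteq> (i + 1) mod length cs" "i \<noteq> (j + 1) mod length cs" "{g (cs ! i), g (cs ! j)} \<in> E"
    unfolding has_chord_def by auto
  then have "h ` {g (cs ! i), g (cs ! j)} \<in> (`) h ` E" by blast
  then have "{cs ! i, cs ! j} \<in> (`) h ` E" using hg nth_W ij(1,2) by simp
  then show "has_chord ((`) h ` E) cs" unfolding has_chord_def using ij by blast
qed

section \<open>Spaces of real functions\<close>

lemma scaleR_fun_apply [simp]: "(c *\<^sub>R y) x = c *\<^sub>R y x"
  by (simp add: scaleR_fun_def)

lemma sum_fun_apply: "sum F A x = (\<Sum>a\<in>A. F a x)"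
  by (induction A rule: infinite_finite_induct) simp_all

lemma linear_sum_apply: "linear (\<lambda>x :: 'a \<Rightarrow> real. \<Sum>f\<in>I. x f)"
  by (rule linearI) (simp_all add: sum.distrib sum_distrib_left)

lemma sum_mult_indicator_singleton:
  "finite A \<Longrightarrow> (\<Sum>f\<in>A. y f * indicator {f} h) = (if h \<in> A then y h else (0::real))"
  by (simp add: indicator_def of_bool_def if_distrib sum.delta cong: if_cong)

lemma sum_indicator_singleton:
  "finite A \<Longrightarrow> (\<Sum>x\<in>A. indicator {f} x) = (if f \<in> A then 1 else (0::real))"
  by (simp add: indicator_def of_bool_def sum.delta' cong: if_cong)

lemma affdim_eq_dim:
  fixes S :: "'a::real_vector set"
  assumes a: "a \<in> S" and U: "subspace U" and SU: "\<And>x. x \<in> S \<Longrightarrow> x - a \<in> U"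
    and span: "U \<subseteq> span {x - y | x y. x \<in> S \<and> y \<in> S}"
  shows "affdim S = int (dim U)"
proof -
  define b where "b = (SOME a. a \<in> S)"
  have b: "b \<in> S" unfolding b_def using a by (rule someI)
  have "span ((\<lambda>x. x - b) ` S) = U"
  proof (rule antisym)
    have "x - b \<in> U" if "x \<in> S" for x
      using real_vector.subspace_diff[OF U SU[OF that] SU[OF b]] by simp
    then show "span ((\<lambda>x. x - b) ` S) \<subseteq> U"
      by (intro real_vector.span_minimal[OF _ U]) auto
    have "x - y \<in> span ((\<lambda>x. x - b) ` S)" if "x \<in> S" "y \<in> S" for x y
      using real_vector.span_diff[OF real_vector.span_base real_vector.span_base, of "x - b" _ "y - b"]
        that by simp
    then have "span {x - y | x y. x \<in> S \<and> y \<in> S} \<subseteq> span ((\<lambda>x. x - b) ` S)"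
      by (intro real_vector.span_minimal[OF _ real_vector.subspace_span]) auto
    then show "U \<subseteq> span ((\<lambda>x. x - b) ` S)" using span by blast
  qed
  then have "dim ((\<lambda>x. x - b) ` S) = dim U" by (metis real_vector.dim_span)
  then show ?thesis unfolding affdim_def b_def using a by auto
qed

lemma dim_span_kronecker:
  fixes v :: "'a \<Rightarrow> 'a \<Rightarrow> real"
  assumes J: "finite J" and kron: "\<And>f g. f \<in> J \<Longrightarrow> g \<in> J \<Longrightarrow> v f g = (if f = g then 1 else 0)"
  shows "dim (span (v ` J)) = card J"
proof -
  have inj: "inj_on v J" using kron by (intro inj_onI) (metis zero_neq_one)
  have "independent (v ` J)"
  proof (rule real_vector.independent_if_scalars_zero)
    fix c :: "('a \<Rightarrow> real) \<Rightarrow> real" and w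
    assume sum: "(\<Sum>w\<in>v ` J. c w *\<^sub>R w) = 0" and w: "w \<in> v ` J"
    then obtain f where f: "f \<in> J" "w = v f" by blast
    have "(\<Sum>w\<in>v ` J. c w *\<^sub>R w) f = (\<Sum>g\<in>J. c (v g) * v g f)"
      by (simp add: sum_fun_apply sum.reindex[OF inj])
    also have "\<dots> = (\<Sum>g\<in>J. if g = f then c (v g) else 0)"
      using f(1) kron by (intro sum.cong) auto
    also have "\<dots> = c w" using f J by simp
    finally show "c w = 0" using sum by simp
  qed (use J in simp)
  then show ?thesis
    by (simp add: real_vector.dim_eq_card_independent card_image[OF inj])
qed

definition supported_on :: "'a set \<Rightarrow> ('a \<Rightarrow> real) set" where
  "supported_on J = {y. \<forall>f. f \<notin> J \<longrightarrow> y f = 0}"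

definition zero_sum_on :: "'a set \<Rightarrow> ('a \<Rightarrow> real) set" where
  "zero_sum_on J = {y \<in> supported_on J. (\<Sum>f\<in>J. y f) = 0}"

lemma subspace_supported_on: "subspace (supported_on J)"
  unfolding real_vector.subspace_def supported_on_def by simp

lemma subspace_zero_sum_on: "subspace (zero_sum_on J)"
  unfolding real_vector.subspace_def zero_sum_on_def supported_on_def
  by (simp add: sum.distrib sum_distrib_left[symmetric])

lemma supported_on_eq_span:
  assumes J: "finite J"
  shows "supported_on J = span ((\<lambda>f. indicator {f}) ` J)"
proof
  show "span ((\<lambda>f. indicator {f}) ` J) \<subseteq> supported_on J"
    by (intro real_vector.span_minimal subspace_supported_on)
      (auto simp: supported_on_def split: split_indicator)
  show "supported_on J \<subseteq> span ((\<lambda>f. indicator {f}) ` J)"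
  proof
    fix y assume y: "y \<in> supported_on J"
    have "y = (\<Sum>f\<in>J. y f *\<^sub>R indicator {f})"
    proof
      fix h
      have "(\<Sum>f\<in>J. y f *\<^sub>R indicator {f}) h = (if h \<in> J then y h else 0)"
        using J by (simp add: sum_fun_apply sum_mult_indicator_singleton del: sum_mult_indicator)
      also have "\<dots> = y h" using y by (simp add: supported_on_def)
      finally show "y h = (\<Sum>f\<in>J. y f *\<^sub>R indicator {f}) h" by simp
    qed
    also have "\<dots> \<in> span ((\<lambda>f. indicator {f}) ` J)"
      by (intro real_vector.span_sum real_vector.span_scale real_vector.span_base) auto
    finally show "y \<in> span ((\<lambda>f. indicator {f}) ` J)" .
  qed
qed

lemma dim_supported_on: "finite J \<Longrightarrow> dim (supported_on J) = card J"
  unfolding supported_on_eq_span by (rule dim_span_kronecker) auto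

lemma zero_sum_on_eq_span:
  assumes J: "finite J" and g: "g \<in> J"
  shows "zero_sum_on J = span ((\<lambda>f. indicator {f} - indicator {g}) ` (J - {g}))"
proof
  show "span ((\<lambda>f. indicator {f} - indicator {g}) ` (J - {g})) \<subseteq> zero_sum_on J"
    using J g
    by (intro real_vector.span_minimal subspace_zero_sum_on)
      (auto simp: zero_sum_on_def supported_on_def sum_subtractf sum_indicator_singleton
        split: split_indicator)
  show "zero_sum_on J \<subseteq> span ((\<lambda>f. indicator {f} - indicator {g}) ` (J - {g}))"
  proof
    fix y assume y: "y \<in> zero_sum_on J"
    have rest: "(\<Sum>f\<in>J - {g}. y f) = - y g"
      using y sum.remove[OF J g, of y] unfolding zero_sum_on_def by simp
    have "y = (\<Sum>f\<in>J - {g}. y f *\<^sub>R (indicator {f} - indicator {g}))"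
    proof
      fix h
      have "(\<Sum>f\<in>J - {g}. y f *\<^sub>R (indicator {f} - indicator {g})) h
          = (if h \<in> J - {g} then y h else 0) - (\<Sum>f\<in>J - {g}. y f) * indicator {g} h"
        using J by (simp add: sum_fun_apply right_diff_distrib sum_subtractf sum_distrib_right
            sum_mult_indicator_singleton del: sum_mult_indicator)
      also have "\<dots> = y h"
        using y J unfolding rest by (auto simp: zero_sum_on_def supported_on_def indicator_def)
      finally show "y h = (\<Sum>f\<in>J - {g}. y f *\<^sub>R (indicator {f} - indicator {g})) h" by simp
    qed
    also have "\<dots> \<in> span ((\<lambda>f. indicator {f} - indicator {g}) ` (J - {g}))"
      by (intro real_vector.span_sum real_vector.span_scale real_vector.span_base) auto
    finally show "y \<in> span ((\<lambda>f. indicator {f} - indicator {g}) ` (J - {g}))" .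
  qed
qed

lemma dim_zero_sum_on:
  assumes "finite J" "g \<in> J"
  shows "dim (zero_sum_on J) = card J - 1"
proof -
  have "dim (zero_sum_on J) = card (J - {g})"
    unfolding zero_sum_on_eq_span[OF assms] using assms(1)
    by (intro dim_span_kronecker) (auto simp: indicator_def)
  then show ?thesis using assms by simp
qed

section \<open>The cycle and its rotations\<close>

lemma cyc_ext_eq:
  assumes "2 \<le> k"
  shows "cyc_ext k = (\<lambda>u. {u, Suc u mod k}) ` {..<k}"
proof
  show "cyc_ext k \<subseteq> (\<lambda>u. {u, Suc u mod k}) ` {..<k}"
  proof
    fix e assume "e \<in> cyc_ext k"
    then consider i where "e = {i - 1, i}" "1 \<le> i" "i \<le> k - 1" | "e = {k - 1, 0}"
      unfolding cyc_ext_def by blast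
    then show "e \<in> (\<lambda>u. {u, Suc u mod k}) ` {..<k}"
    proof cases
      case 1
      then show ?thesis using assms by (intro image_eqI[of _ _ "i - 1"]) auto
    next
      case 2
      then show ?thesis using assms by (intro image_eqI[of _ _ "k - 1"]) auto
    qed
  qed
  show "(\<lambda>u. {u, Suc u mod k}) ` {..<k} \<subseteq> cyc_ext k"
  proof
    fix e assume "e \<in> (\<lambda>u. {u, Suc u mod k}) ` {..<k}"
    then obtain u where u: "u < k" "e = {u, Suc u mod k}" by blast
    show "e \<in> cyc_ext k"
    proof (cases "Suc u = k")
      case True
      then show ?thesis using u unfolding cyc_ext_def by auto
    next
      case False
      then show ?thesis using u unfolding cyc_ext_def by (auto intro!: exI[of _ "Suc u"])
    qed
  qed
qed

lemma Suc_mod_eq_if: "p < k \<Longrightarrow> Suc p mod k = (if Suc p = k then 0 else Suc p)"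
  by auto

lemma doubleton_in_cyc_ext_iff:
  assumes "2 \<le> k"
  shows "{p, q} \<in> cyc_ext k \<longleftrightarrow> (p < k \<and> q = Suc p mod k) \<or> (q < k \<and> p = Suc q mod k)"
  unfolding cyc_ext_eq[OF assms] by (auto simp: doubleton_eq_iff)

lemma doubleton_in_cyc_ext_iff':
  "2 \<le> k \<Longrightarrow> p < k \<Longrightarrow> q < k \<Longrightarrow> {p, q} \<in> cyc_ext k \<longleftrightarrow>
     q = (if Suc p = k then 0 else Suc p) \<or> p = (if Suc q = k then 0 else Suc q)"
  by (simp add: doubleton_in_cyc_ext_iff Suc_mod_eq_if)

lemma cyc_ext_subset: "2 \<le> k \<Longrightarrow> e \<in> cyc_ext k \<Longrightarrow> e \<subseteq> {..<k}"
  using cyc_ext_eq[of k] by auto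

lemma cyc_ext_subset_pairs:
  assumes "2 \<le> k"
  shows "cyc_ext k \<subseteq> {{i, j} | i j. i < k \<and> j < k \<and> i \<noteq> j}"
proof
  fix e assume "e \<in> cyc_ext k"
  then obtain u where u: "u < k" "e = {u, Suc u mod k}" using cyc_ext_eq[OF assms] by auto
  moreover have "u \<noteq> Suc u mod k" using u(1) assms by (cases "Suc u = k") auto
  ultimately show "e \<in> {{i, j} | i j. i < k \<and> j < k \<and> i \<noteq> j}"
    by (intro CollectI exI[of _ u] exI[of _ "Suc u mod k"]) simp
qed

lemma cyc_int_subset: "e \<in> cyc_int k \<Longrightarrow> e \<subseteq> {..<k}"
  unfolding cyc_int_def by auto

lemma doubleton_in_cyc_int:
  "u < k \<Longrightarrow> v < k \<Longrightarrow> u \<noteq> v \<Longrightarrow> {u, v} \<notin> cyc_ext k \<Longrightarrow> {u, v} \<in> cyc_int k"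
  unfolding cyc_int_def by blast

lemma doubleton_in_cyc_intD:
  assumes "{u, v} \<in> cyc_int k" "2 \<le> k"
  shows "u < k" "v < k" "u \<noteq> v" "v \<noteq> (u + 1) mod k" "u \<noteq> (v + 1) mod k"
proof -
  obtain i j where ij: "{u, v} = {i, j}" "i < k" "j < k" "i \<noteq> j" "{u, v} \<notin> cyc_ext k"
    using assms(1) unfolding cyc_int_def by blast
  then show "u < k" "v < k" "u \<noteq> v" by (auto simp: doubleton_eq_iff)
  then show "v \<noteq> (u + 1) mod k" "u \<noteq> (v + 1) mod k"
    using ij(5) doubleton_in_cyc_ext_iff[OF assms(2), of u v] by auto
qed

lemma doubleton_in_cyc_edges: "u < k \<Longrightarrow> w < k \<Longrightarrow> u \<noteq> w \<Longrightarrow> {u, w} \<in> cyc_ext k \<union> cyc_int k"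
  using doubleton_in_cyc_int[of u k w] by blast

lemma finite_cyc_int: "finite (cyc_int k)"
  by (rule finite_subset[of _ "Pow {..<k}"]) (auto dest: cyc_int_subset)

lemma card_cyc_edge:
  assumes "2 \<le> k" "e \<in> cyc_ext k \<union> cyc_int k"
  shows "card e = 2"
proof -
  have "e \<in> {{i, j} | i j. i < k \<and> j < k \<and> i \<noteq> j}"
    using assms cyc_ext_subset_pairs unfolding cyc_int_def by blast
  then show ?thesis by (auto simp: card_insert_if)
qed

lemma cycle_edges_upt: "2 \<le> k \<Longrightarrow> cycle_edges [0..<k] = cyc_ext k"
  unfolding cycle_edges_conv_nth cyc_ext_eq by (intro image_cong) auto

lemma cyc_automorphism:
  assumes k: "2 \<le> k" and h: "bij_betw h {..<k} {..<k}" and ext: "(`) h ` cyc_ext k \<subseteq> cyc_ext k"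
  shows "(`) h ` cyc_ext k = cyc_ext k" "(`) h ` cyc_int k = cyc_int k"
proof -
  let ?Q = "{{i, j} | i j. i < k \<and> j < k \<and> i \<noteq> j}"
  have inj: "inj_on ((`) h) (Pow {..<k})"
    using h unfolding bij_betw_def by (intro inj_on_image_Pow) simp
  have Q: "?Q \<subseteq> Pow {..<k}" by auto
  then have finQ: "finite ?Q" by (rule finite_subset) simp
  have ext_sub: "cyc_ext k \<subseteq> ?Q" by (rule cyc_ext_subset_pairs[OF k])
  have "(`) h ` ?Q \<subseteq> ?Q"
  proof
    fix e assume "e \<in> (`) h ` ?Q"
    then obtain x where "x \<in> ?Q" "e = h ` x" by (rule imageE)
    then obtain i j where ij: "e = {h i, h j}" "i < k" "j < k" "i \<noteq> j" by auto
    moreover have "h i < k" "h j < k" "h i \<noteq> h j"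
      using h ij unfolding bij_betw_def by (auto dest: inj_onD)
    ultimately show "e \<in> ?Q" by (intro CollectI exI[of _ "h i"] exI[of _ "h j"]) simp
  qed
  then have hQ: "(`) h ` ?Q = ?Q"
    using inj_on_subset[OF inj Q] finQ by (intro endo_inj_surj)
  show hext: "(`) h ` cyc_ext k = cyc_ext k"
    using ext inj_on_subset[OF inj] ext_sub Q finite_subset[OF ext_sub finQ]
    by (intro endo_inj_surj) auto
  have "(`) h ` (?Q - cyc_ext k) = (`) h ` ?Q - (`) h ` cyc_ext k"
    by (rule inj_on_image_set_diff[OF inj]) (use Q ext_sub in blast)+
  then show "(`) h ` cyc_int k = cyc_int k" unfolding cyc_int_def hQ hext .
qed

definition rot :: "nat \<Rightarrow> nat \<Rightarrow> nat \<Rightarrow> nat" where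
  "rot k a i = (i + a) mod k"

lemma rot_rot:
  assumes "i < k" "a \<le> k"
  shows "rot k (k - a) (rot k a i) = i"
proof -
  have "rot k (k - a) (rot k a i) = (i + a + (k - a)) mod k" unfolding rot_def by (simp add: mod_simps)
  also have "i + a + (k - a) = i + k" using assms(2) by simp
  finally show ?thesis using assms(1) by simp
qed

lemma bij_betw_rot:
  assumes "0 < k" "a \<le> k"
  shows "bij_betw (rot k a) {..<k} {..<k}"
proof (rule bij_betw_byWitness[where f' = "rot k (k - a)"])
  show "\<forall>i\<in>{..<k}. rot k (k - a) (rot k a i) = i" using assms(2) rot_rot by simp
  show "\<forall>i\<in>{..<k}. rot k a (rot k (k - a) i) = i" using assms(2) rot_rot[of _ k "k - a"] by simp
qed (use assms(1) in \<open>auto simp: rot_def\<close>)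

lemma image_rot_cyc_ext_subset:
  assumes "2 \<le> k"
  shows "(`) (rot k a) ` cyc_ext k \<subseteq> cyc_ext k"
proof
  fix e assume "e \<in> (`) (rot k a) ` cyc_ext k"
  then obtain u where u: "u < k" "e = rot k a ` {u, Suc u mod k}"
    unfolding cyc_ext_eq[OF assms] image_image by blast
  have "rot k a (Suc u mod k) = Suc (rot k a u) mod k" unfolding rot_def by (simp add: mod_simps)
  then have "e = {rot k a u, Suc (rot k a u) mod k}" using u(2) by simp
  moreover have "rot k a u < k" using assms unfolding rot_def by simp
  then have "{rot k a u, Suc (rot k a u) mod k} \<in> cyc_ext k"
    unfolding cyc_ext_eq[OF assms] by (intro imageI) simp
  ultimately show "e \<in> cyc_ext k" by simp
qed

lemma rot_automorphism:
  assumes "2 \<le> k" "a \<le> k"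
  shows "(`) (rot k a) ` cyc_ext k = cyc_ext k" "(`) (rot k a) ` cyc_int k = cyc_int k"
  using cyc_automorphism[OF assms(1) bij_betw_rot image_rot_cyc_ext_subset[OF assms(1)]] assms
  by simp_all

section \<open>Validity\<close>

lemma card_chordal_completion_ge:
  assumes k: "3 \<le> k" and T: "T \<subseteq> cyc_int k" and chordal: "chordal (cyc_V k) (cyc_ext k \<union> T)"
  shows "k - 3 \<le> card T"
proof -
  have k2: "2 \<le> k" using k by simp
  have E2: "\<forall>e\<in>cyc_ext k \<union> T. card e = 2" using card_cyc_edge[OF k2] T by blast
  have "chords (cyc_ext k \<union> T) [0..<k] = T"
    using T cyc_ext_subset[OF k2] cyc_int_subset[of _ k]
    unfolding chords_def cycle_edges_upt[OF k2] cyc_int_def by (auto simp: atLeast0LessThan)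
  then show ?thesis
    using card_chords_ge[OF chordal E2, of "[0..<k]"] k cycle_edges_upt[OF k2]
    by (simp add: cyc_V_def atLeast0LessThan)
qed

lemma indicator_in_X_cyc:
  assumes "T \<subseteq> cyc_int k" "chordal (cyc_V k) (cyc_ext k \<union> T)"
  shows "indicator T \<in> X_cyc k"
proof -
  have "{f \<in> cyc_int k. indicator T f = (1::real)} = T" using assms(1) by (auto simp: indicator_def)
  then show ?thesis using assms unfolding X_cyc_def by (auto simp: indicator_def)
qed

lemma sum_indicator_cyc_int:
  "T \<subseteq> cyc_int k \<Longrightarrow> (\<Sum>f\<in>cyc_int k. indicator T f) = real (card T)"
  unfolding indicator_def by (simp add: sum.If_cases finite_cyc_int Int_absorb1)

lemma X_cyc_sum_ge:
  assumes k: "3 \<le> k" and x: "x \<in> X_cyc k"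
  shows "real k - 3 \<le> (\<Sum>f\<in>cyc_int k. x f)"
proof -
  define T where "T = {f \<in> cyc_int k. x f = 1}"
  have T: "T \<subseteq> cyc_int k" "chordal (cyc_V k) (cyc_ext k \<union> T)"
    using x unfolding X_cyc_def T_def by auto
  have "(\<Sum>f\<in>cyc_int k. x f) = (\<Sum>f\<in>cyc_int k. indicator T f)"
    using x unfolding X_cyc_def T_def by (intro sum.cong) (auto simp: indicator_def)
  then show ?thesis
    using sum_indicator_cyc_int[OF T(1)] card_chordal_completion_ge[OF k T] k by simp
qed

lemma convex_hull_X_cyc_sum_ge:
  assumes "3 \<le> k" "y \<in> convex hull X_cyc k"
  shows "real k - 3 \<le> (\<Sum>f\<in>cyc_int k. y f)"
proof -
  have "convex hull X_cyc k \<subseteq> (\<lambda>x. \<Sum>f\<in>cyc_int k. x f) -` {real k - 3..}"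
    using X_cyc_sum_ge[OF assms(1)]
    by (intro hull_minimal convex_linear_vimage[OF linear_sum_apply]) auto
  then show ?thesis using assms(2) by auto
qed

section \<open>Dimension of the polytope\<close>

lemma indicator_cyc_int_in_X_cyc: "indicator (cyc_int k) \<in> X_cyc k"
proof (rule indicator_in_X_cyc)
  show "chordal (cyc_V k) (cyc_ext k \<union> cyc_int k)"
    by (rule chordal_if_perfect_elimination[where \<rho> = "\<lambda>v. 0"])
      (metis doubleton_in_cyc_edges cyc_V_def lessThan_iff)
qed simp

lemma indicator_cyc_int_remove_in_X_cyc:
  assumes f: "f \<in> cyc_int k"
  shows "indicator (cyc_int k - {f}) \<in> X_cyc k"
proof (rule indicator_in_X_cyc)
  obtain p q where f_eq: "f = {p, q}" using f unfolding cyc_int_def by blast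
  show "chordal (cyc_V k) (cyc_ext k \<union> (cyc_int k - {f}))"
  proof (rule chordal_if_perfect_elimination[where \<rho> = "\<lambda>v. if v = p then 0 else 1"])
    fix v u w
    assume V: "v \<in> cyc_V k" "u \<in> cyc_V k" "w \<in> cyc_V k" and ne: "u \<noteq> w" "u \<noteq> v" "w \<noteq> v"
      and rank: "(if v = p then 0 else 1) \<le> (if u = p then 0 else (1::nat))"
        "(if v = p then 0 else 1) \<le> (if w = p then 0 else (1::nat))"
    have "u \<noteq> p" "w \<noteq> p" using rank ne by (auto split: if_splits)
    then have "{u, w} \<noteq> f" using f_eq by (auto simp: doubleton_eq_iff)
    moreover have "{u, w} \<in> cyc_ext k \<union> cyc_int k"
      using V ne by (intro doubleton_in_cyc_edges) (auto simp: cyc_V_def)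
    ultimately show "{u, w} \<in> cyc_ext k \<union> (cyc_int k - {f})" by blast
  qed
qed auto

lemma convex_hull_X_cyc_subset: "convex hull X_cyc k \<subseteq> supported_on (cyc_int k)"
  by (intro hull_minimal subspace_imp_convex subspace_supported_on)
    (auto simp: X_cyc_def supported_on_def)

lemma affdim_convex_hull_X_cyc: "affdim (convex hull X_cyc k) = int (card (cyc_int k))"
proof -
  let ?P = "convex hull X_cyc k"
  have full: "indicator (cyc_int k) \<in> ?P"
    using indicator_cyc_int_in_X_cyc by (rule hull_inc)
  have "affdim ?P = int (dim (supported_on (cyc_int k)))"
  proof (rule affdim_eq_dim[OF full subspace_supported_on])
    fix x assume "x \<in> ?P"
    then show "x - indicator (cyc_int k) \<in> supported_on (cyc_int k)"
      using full convex_hull_X_cyc_subset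
      by (intro real_vector.subspace_diff[OF subspace_supported_on]) blast+
  next
    have "indicator {f} \<in> {x - y | x y. x \<in> ?P \<and> y \<in> ?P}" if f: "f \<in> cyc_int k" for f
    proof -
      have "indicator (cyc_int k - {f}) \<in> ?P"
        using indicator_cyc_int_remove_in_X_cyc[OF f] by (rule hull_inc)
      moreover have "indicat_real {f} = indicator (cyc_int k) - indicator (cyc_int k - {f})"
        using f by (auto simp: fun_eq_iff split: split_indicator)
      ultimately show ?thesis using full by blast
    qed
    then show "supported_on (cyc_int k) \<subseteq> span {x - y | x y. x \<in> ?P \<and> y \<in> ?P}"
      unfolding supported_on_eq_span[OF finite_cyc_int]
      by (intro real_vector.span_mono) blast
  qed
  then show ?thesis by (simp add: dim_supported_on finite_cyc_int)
qed

section \<open>Triangulations on the face\<close>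

definition tight_face :: "nat \<Rightarrow> (nat set \<Rightarrow> real) set" where
  "tight_face k = {x \<in> convex hull X_cyc k. (\<Sum>f\<in>cyc_int k. x f) = real k - 3}"

lemma triangulation_in_tight_face:
  assumes k: "3 \<le> k" and T: "T \<subseteq> cyc_int k" "chordal (cyc_V k) (cyc_ext k \<union> T)"
    and card: "card T = k - 3"
  shows "indicator T \<in> tight_face k"
proof -
  have "(\<Sum>f\<in>cyc_int k. indicator T f) = real k - 3"
    using sum_indicator_cyc_int[OF T(1)] card k by simp
  moreover have "indicator T \<in> convex hull X_cyc k"
    using indicator_in_X_cyc[OF T] by (rule hull_inc)
  ultimately show ?thesis unfolding tight_face_def by simp
qed

lemma rotated_triangulation_in_tight_face:
  assumes k: "3 \<le> k" "a \<le> k" and T: "T \<subseteq> cyc_int k" "chordal (cyc_V k) (cyc_ext k \<union> T)"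
    and card: "card T = k - 3"
  shows "indicator ((`) (rot k a) ` T) \<in> tight_face k"
proof (rule triangulation_in_tight_face[OF k(1)])
  let ?h = "rot k a"
  have k2: "2 \<le> k" using k by simp
  note aut = rot_automorphism[OF k2 k(2)]
  have bij: "bij_betw ?h (cyc_V k) (cyc_V k)" unfolding cyc_V_def using k by (intro bij_betw_rot) simp_all
  have TV: "T \<subseteq> Pow (cyc_V k)" using T(1) cyc_int_subset unfolding cyc_V_def by auto
  moreover have "cyc_ext k \<subseteq> Pow (cyc_V k)" using cyc_ext_subset[OF k2] unfolding cyc_V_def by auto
  ultimately have edges_V: "\<forall>e\<in>cyc_ext k \<union> T. e \<subseteq> cyc_V k" by auto
  have "chordal (cyc_V k) ((`) ?h ` (cyc_ext k \<union> T))" by (rule chordal_image[OF bij edges_V T(2)])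
  then show "chordal (cyc_V k) (cyc_ext k \<union> (`) ?h ` T)" unfolding image_Un aut(1) .
  show "(`) ?h ` T \<subseteq> cyc_int k" using image_mono[OF T(1), of "(`) ?h"] unfolding aut(2) .
  have "inj_on ((`) ?h) T"
    using inj_on_image_Pow[OF bij_betw_imp_inj_on[OF bij]] TV by (rule inj_on_subset)
  then show "card ((`) ?h ` T) = k - 3" using card by (simp add: card_image)
qed

definition fan :: "nat \<Rightarrow> nat set set" where
  "fan k = {{0, j} | j. 2 \<le> j \<and> j \<le> k - 2}"

definition flip :: "nat \<Rightarrow> nat \<Rightarrow> nat set set" where
  "flip k j = insert {j - 1, j + 1} (fan k - {{0, j}})"

lemma doubleton_in_fan_iff:
  "{p, q} \<in> fan k \<longleftrightarrow> (p = 0 \<and> 2 \<le> q \<and> q \<le> k - 2) \<or> (q = 0 \<and> 2 \<le> p \<and> p \<le> k - 2)"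
  unfolding fan_def by (auto simp: doubleton_eq_iff)

lemma doubleton_in_flip_iff:
  "{p, q} \<in> flip k j \<longleftrightarrow> {p, q} = {j - 1, j + 1} \<or>
     ({p, q} \<in> fan k \<and> {p, q} \<noteq> {0, j})"
  unfolding flip_def by auto

lemma fan_subset_cyc_int:
  assumes "4 \<le> k"
  shows "fan k \<subseteq> cyc_int k"
proof
  fix e assume "e \<in> fan k"
  then obtain j where j: "e = {0, j}" "2 \<le> j" "j \<le> k - 2" unfolding fan_def by blast
  then have "j < k" "{0, j} \<notin> cyc_ext k" using assms by (auto simp: doubleton_in_cyc_ext_iff')
  then show "e \<in> cyc_int k" using doubleton_in_cyc_int[of 0 k j] j assms by auto
qed

lemma flip_subset_cyc_int:
  assumes "4 \<le> k" "2 \<le> j" "j \<le> k - 2"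
  shows "flip k j \<subseteq> cyc_int k"
proof -
  have "j + 1 < k" using assms by arith
  then have "{j - 1, j + 1} \<notin> cyc_ext k" using assms by (simp add: doubleton_in_cyc_ext_iff'; arith)
  then have "{j - 1, j + 1} \<in> cyc_int k"
    using doubleton_in_cyc_int[of "j - 1" k "j + 1"] assms \<open>j + 1 < k\<close> by auto
  then show ?thesis unfolding flip_def using fan_subset_cyc_int[OF assms(1)] by auto
qed

lemma card_fan: "card (fan k) = k - 3"
proof -
  have "fan k = (\<lambda>j. {0, j}) ` {2..k-2}" unfolding fan_def by auto
  moreover have "inj_on (\<lambda>j. {0::nat, j}) {2..k-2}" by (rule inj_onI) (auto simp: doubleton_eq_iff)
  ultimately show ?thesis by (simp add: card_image)
qed

lemma card_flip:
  assumes "4 \<le> k" "2 \<le> j" "j \<le> k - 2"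
  shows "card (flip k j) = k - 3"
proof -
  have "finite (fan k)" using fan_subset_cyc_int[OF assms(1)] finite_cyc_int by (rule finite_subset)
  moreover have "{0, j} \<in> fan k" using assms unfolding fan_def by auto
  moreover have "{j - 1, j + 1} \<notin> fan k" using assms by (simp add: doubleton_in_fan_iff)
  ultimately show ?thesis using card_fan[of k] assms unfolding flip_def
    by (simp add: card_insert_if)
qed

lemma chordal_fan:
  assumes "4 \<le> k"
  shows "chordal (cyc_V k) (cyc_ext k \<union> fan k)"
proof (rule chordal_if_perfect_elimination[where \<rho> = "\<lambda>v. if v = 0 then k else v"])
  fix v u w
  assume "v \<in> cyc_V k" "u \<in> cyc_V k" "w \<in> cyc_V k" "{v, u} \<in> cyc_ext k \<union> fan k"
    "{v, w} \<in> cyc_ext k \<union> fan k" "u \<noteq> w" "u \<noteq> v" "w \<noteq> v"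
    "(if v = 0 then k else v) \<le> (if u = 0 then k else u)"
    "(if v = 0 then k else v) \<le> (if w = 0 then k else w)"
  then show "{u, w} \<in> cyc_ext k \<union> fan k"
    using assms unfolding cyc_V_def
    by (simp add: doubleton_in_cyc_ext_iff doubleton_in_fan_iff Suc_mod_eq_if split: if_splits)
qed

lemma flip_later_neighbour:
  assumes k: "4 \<le> k" "2 \<le> j" "j \<le> k - 2" and vu: "v < k" "u < k" "u \<noteq> v"
    and e: "{v, u} \<in> cyc_ext k \<union> flip k j"
    and rank: "(if v = j then 0 else if v = 0 then k else v) \<le> (if u = j then 0 else if u = 0 then k else u)"
  shows "(v = j \<and> (u = j - 1 \<or> u = j + 1)) \<or> (v = j - 1 \<and> (u = 0 \<or> u = j + 1))
       \<or> (v \<noteq> j \<and> v \<noteq> j - 1 \<and> v \<noteq> 0 \<and> (u = 0 \<or> u = v + 1))"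
proof -
  consider (succ) "u = (if Suc v = k then 0 else Suc v)" | (pred) "v = (if Suc u = k then 0 else Suc u)"
    | (ear) "v = j - 1" "u = j + 1" | (ear') "u = j - 1" "v = j + 1"
    | (fan) "v = 0" "2 \<le> u" "u \<le> k - 2" "u \<noteq> j" | (fan') "u = 0" "2 \<le> v" "v \<le> k - 2" "v \<noteq> j"
    using e doubleton_in_cyc_ext_iff'[of k v u] k vu
    by (auto simp: doubleton_in_flip_iff doubleton_in_fan_iff doubleton_eq_iff)
  then show ?thesis using k vu rank by cases (auto split: if_splits)
qed

lemma chordal_flip:
  assumes k: "4 \<le> k" "2 \<le> j" "j \<le> k - 2"
  shows "chordal (cyc_V k) (cyc_ext k \<union> flip k j)"
proof (rule chordal_if_perfect_elimination[where \<rho> = "\<lambda>v. if v = j then 0 else if v = 0 then k else v"])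
  fix v u w
  assume V: "v \<in> cyc_V k" "u \<in> cyc_V k" "w \<in> cyc_V k" and eu: "{v, u} \<in> cyc_ext k \<union> flip k j"
    and ew: "{v, w} \<in> cyc_ext k \<union> flip k j" and ne: "u \<noteq> w" "u \<noteq> v" "w \<noteq> v"
    and ru: "(if v = j then 0 else if v = 0 then k else v) \<le> (if u = j then 0 else if u = 0 then k else u)"
    and rw: "(if v = j then 0 else if v = 0 then k else v) \<le> (if w = j then 0 else if w = 0 then k else w)"
  have lt: "v < k" "u < k" "w < k" using V unfolding cyc_V_def by auto
  note Lu = flip_later_neighbour[OF k lt(1) lt(2) ne(2) eu ru]
  note Lw = flip_later_neighbour[OF k lt(1) lt(3) ne(3) ew rw]
  have pair: "{u, w} = {x, y}" if "u \<in> {x, y}" "w \<in> {x, y}" for x y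
    using that ne(1) by auto
  have "{u, w} = {j - 1, j + 1} \<or> {u, w} = {0, j + 1} \<or>
      ({u, w} = {0, v + 1} \<and> v \<noteq> j \<and> v \<noteq> j - 1 \<and> v \<noteq> 0)"
  proof (cases "v = j")
    case True
    then have "u \<in> {j - 1, j + 1}" "w \<in> {j - 1, j + 1}" using Lu Lw k by auto
    then have "{u, w} = {j - 1, j + 1}" by (rule pair)
    then show ?thesis by simp
  next
    case v_ne_j: False
    show ?thesis
    proof (cases "v = j - 1")
      case True
      then have "u \<in> {0, j + 1}" "w \<in> {0, j + 1}" using Lu Lw k v_ne_j by auto
      then have "{u, w} = {0, j + 1}" by (rule pair)
      then show ?thesis by simp
    next
      case False
      then have "u \<in> {0, v + 1}" "w \<in> {0, v + 1}" "v \<noteq> 0" using Lu Lw k v_ne_j by auto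
      then have "{u, w} = {0, v + 1}" by (intro pair) simp_all
      then show ?thesis using v_ne_j False \<open>v \<noteq> 0\<close> by simp
    qed
  qed
  then consider (ear) "{u, w} = {j - 1, j + 1}" | (j) "{u, w} = {0, j + 1}"
    | (other) "{u, w} = {0, v + 1}" "v \<noteq> j" "v \<noteq> j - 1" "v \<noteq> 0"
    by meson
  then show "{u, w} \<in> cyc_ext k \<union> flip k j"
  proof cases
    case ear
    then show ?thesis by (simp add: flip_def)
  next
    case j
    have "j + 1 < k" using k by arith
    show ?thesis
    proof (cases "j + 1 = k - 1")
      case True
      then have "{0, j + 1} \<in> cyc_ext k" using k by (subst doubleton_in_cyc_ext_iff') auto
      then show ?thesis using j by simp
    next
      case False
      then have "{0, j + 1} \<in> flip k j" using k \<open>j + 1 < k\<close>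
        by (simp add: doubleton_in_flip_iff doubleton_in_fan_iff doubleton_eq_iff)
      then show ?thesis using j by simp
    qed
  next
    case other
    have "v + 1 < k" using other(1) lt by (auto simp: doubleton_eq_iff)
    show ?thesis
    proof (cases "v + 1 = k - 1")
      case True
      then have "{0, v + 1} \<in> cyc_ext k" using k by (subst doubleton_in_cyc_ext_iff') auto
      then show ?thesis using other by simp
    next
      case False
      then have "{0, v + 1} \<in> flip k j" using k other \<open>v + 1 < k\<close>
        by (simp add: doubleton_in_flip_iff doubleton_in_fan_iff doubleton_eq_iff) arith
      then show ?thesis using other by simp
    qed
  qed
qed

lemma indicator_fan_in_tight_face: "4 \<le> k \<Longrightarrow> indicator (fan k) \<in> tight_face k"
  by (intro triangulation_in_tight_face fan_subset_cyc_int chordal_fan card_fan) simp_all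

section \<open>Dimension of the face\<close>

definition face_equiv :: "nat \<Rightarrow> nat set \<Rightarrow> nat set \<Rightarrow> bool" where
  "face_equiv k f g \<longleftrightarrow>
     indicat_real {f} - indicator {g} \<in> span {x - y | x y. x \<in> tight_face k \<and> y \<in> tight_face k}"

lemma face_equiv_refl: "face_equiv k f f"
  unfolding face_equiv_def by (simp add: real_vector.span_zero)

lemma face_equiv_sym:
  assumes "face_equiv k f g"
  shows "face_equiv k g f"
proof -
  have "- (indicat_real {f} - indicator {g}) \<in> span {x - y | x y. x \<in> tight_face k \<and> y \<in> tight_face k}"
    using assms unfolding face_equiv_def by (rule real_vector.span_neg)
  then show ?thesis unfolding face_equiv_def by simp
qed

lemma face_equiv_trans:
  assumes "face_equiv k f g" "face_equiv k g h"
  shows "face_equiv k f h"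
proof -
  have "(indicat_real {f} - indicator {g}) + (indicator {g} - indicator {h})
      \<in> span {x - y | x y. x \<in> tight_face k \<and> y \<in> tight_face k}"
    using assms unfolding face_equiv_def by (rule real_vector.span_add)
  then show ?thesis unfolding face_equiv_def by simp
qed

lemma indicator_exchange:
  assumes "d \<in> T" "s \<notin> T"
  shows "indicator T - indicator (insert s (T - {d})) = indicat_real {d} - indicator {s}"
  using assms by (auto simp: fun_eq_iff split: split_indicator)

lemma face_equiv_flip:
  assumes k: "4 \<le> k" "a \<le> k" and j: "2 \<le> j" "j \<le> k - 2"
  shows "face_equiv k (rot k a ` {0, j}) (rot k a ` {j - 1, j + 1})"
proof -
  let ?h = "(`) (rot k a)"
  have inj: "inj_on ?h (Pow {..<k})"
    using k by (intro inj_on_image_Pow bij_betw_imp_inj_on[OF bij_betw_rot]) simp_all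
  have fan_Pow: "fan k \<subseteq> Pow {..<k}" using fan_subset_cyc_int[OF k(1)] cyc_int_subset by blast
  have d: "{0, j} \<in> fan k" using j unfolding fan_def by auto
  have s: "{j - 1, j + 1} \<notin> fan k" using j by (simp add: doubleton_in_fan_iff)
  have "j + 1 < k" using j k by arith
  then have ear_Pow: "{j - 1, j + 1} \<in> Pow {..<k}" by auto
  have "?h ` (fan k - {{0, j}}) = ?h ` fan k - ?h ` {{0, j}}"
    by (rule inj_on_image_set_diff[OF inj]) (use fan_Pow d in auto)
  then have flip: "?h ` flip k j = insert (?h {j - 1, j + 1}) (?h ` fan k - {?h {0, j}})"
    unfolding flip_def by simp
  have "?h {j - 1, j + 1} \<notin> ?h ` fan k"
    using inj_on_image_mem_iff[OF inj ear_Pow fan_Pow] s by simp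
  then have diff: "indicator (?h ` fan k) - indicator (?h ` flip k j)
      = indicat_real {?h {0, j}} - indicator {?h {j - 1, j + 1}}"
    unfolding flip by (intro indicator_exchange imageI d)
  have "indicator (?h ` fan k) \<in> tight_face k"
    using k by (intro rotated_triangulation_in_tight_face fan_subset_cyc_int chordal_fan card_fan) simp_all
  moreover have "indicator (?h ` flip k j) \<in> tight_face k"
    using k j
    by (intro rotated_triangulation_in_tight_face flip_subset_cyc_int chordal_flip card_flip) simp_all
  ultimately show ?thesis unfolding face_equiv_def diff[symmetric] by (intro real_vector.span_base) blast
qed

definition ear :: "nat \<Rightarrow> nat \<Rightarrow> nat set" where
  "ear k v = {(v + k - 1) mod k, Suc v mod k}"

lemma chord_offset_bounds:
  fixes i j n :: nat
  assumes "i < n" "j < n" "i \<noteq> j" "j \<noteq> (i + 1) mod n" "i \<noteq> (j + 1) mod n"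
  shows "2 \<le> (j + n - i) mod n" "(j + n - i) mod n \<le> n - 2"
proof -
  have m1: "(i + 1) mod n = (if Suc i = n then 0 else Suc i)" using assms(1) Suc_mod_eq_if[of i n] by simp
  have m2: "(j + 1) mod n = (if Suc j = n then 0 else Suc j)" using assms(2) Suc_mod_eq_if[of j n] by simp
  have "2 \<le> (j + n - i) mod n \<and> (j + n - i) mod n \<le> n - 2"
  proof (cases "i < j")
    case True
    have e: "j + n - i = (j - i) + n" using True by arith
    have "(j + n - i) mod n = j - i" unfolding e using assms(2) by simp
    then show ?thesis using assms(3-5) m1 m2 True assms(1,2) by (simp split: if_splits; arith)
  next
    case False
    have "j + n - i < n" using False assms(1,3) by arith
    then have "(j + n - i) mod n = j + n - i" by simp
    then show ?thesis using assms(3-5) m1 m2 False assms(1,2) by (simp split: if_splits; arith)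
  qed
  then show "2 \<le> (j + n - i) mod n" "(j + n - i) mod n \<le> n - 2" by simp_all
qed

lemma face_equiv_chord_ear:
  assumes k: "4 \<le> k" and av: "{a, v} \<in> cyc_int k"
  shows "face_equiv k {a, v} (ear k v)"
proof -
  have k2: "2 \<le> k" using k by simp
  note av_facts = doubleton_in_cyc_intD[OF av k2]
  define j where "j = (v + k - a) mod k"
  have j: "2 \<le> j" "j \<le> k - 2"
    using chord_offset_bounds[OF av_facts] unfolding j_def by simp_all
  have jv: "(j + a) mod k = v"
  proof -
    have "(j + a) mod k = (v + k - a + a) mod k" unfolding j_def by (simp add: mod_simps)
    also have "v + k - a + a = v + k" using av_facts by simp
    finally show ?thesis using av_facts by simp
  qed
  have "rot k a ` {0, j} = {a, v}" using av_facts jv by (simp add: rot_def add.commute)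
  moreover have "rot k a ` {j - 1, j + 1} = ear k v"
  proof -
    have "(v + k - 1) mod k = ((j + a) mod k + (k - 1)) mod k" using jv k by simp
    also have "\<dots> = (j + a + (k - 1)) mod k" by (simp add: mod_simps)
    also have "j + a + (k - 1) = (j - 1 + a) + k" using j k by simp
    finally have "(j - 1 + a) mod k = (v + k - 1) mod k" by simp
    moreover have "(j + 1 + a) mod k = Suc v mod k"
    proof -
      have "Suc v mod k = Suc ((j + a) mod k) mod k" using jv by simp
      also have "\<dots> = (j + 1 + a) mod k" by (simp add: mod_simps)
      finally show ?thesis by simp
    qed
    ultimately show ?thesis unfolding ear_def rot_def by simp
  qed
  ultimately show ?thesis using face_equiv_flip[OF k _ j, of a] av_facts by simp
qed

lemma face_equiv_ears_of_chord:
  assumes k: "4 \<le> k" and uv: "{u, v} \<in> cyc_int k"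
  shows "face_equiv k (ear k u) (ear k v)"
proof -
  have "face_equiv k {v, u} (ear k u)" using uv by (intro face_equiv_chord_ear[OF k]) (simp add: insert_commute)
  moreover have "face_equiv k {u, v} (ear k v)" by (rule face_equiv_chord_ear[OF k uv])
  ultimately show ?thesis by (metis face_equiv_sym face_equiv_trans insert_commute)
qed

lemma face_equiv_ear_Suc:
  assumes k: "4 \<le> k" and u: "u < k"
  shows "face_equiv k (ear k u) (ear k (Suc u mod k))"
proof (cases "k = 4")
  \<comment> \<open>For k = 4 the ear chord at u + 1 is the chord {u, u + 2}, whose own ear chord is that at u;
    for larger k the vertex u + 3 is joined by chords to both u and u + 1.\<close>
  case True
  have u4: "u = 0 \<or> u = 1 \<or> u = 2 \<or> u = 3" using u True by auto
  have "{u, (u + 2) mod 4} \<notin> cyc_ext 4" using u4 by (auto simp: doubleton_in_cyc_ext_iff')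
  then have "{u, (u + 2) mod 4} \<in> cyc_int 4" using u4 by (intro doubleton_in_cyc_int) auto
  then have "face_equiv 4 {u, (u + 2) mod 4} (ear 4 ((u + 2) mod 4))"
    by (rule face_equiv_chord_ear[OF order_refl])
  moreover have "ear 4 (Suc u mod 4) = {u, (u + 2) mod 4}" "ear 4 ((u + 2) mod 4) = ear 4 u"
    using u4 by (auto simp: ear_def)
  ultimately show ?thesis using True face_equiv_sym by simp
next
  case False
  define w where "w = (u + 3) mod k"
  have k2: "2 \<le> k" using k by simp
  have w: "w = (if u + 3 < k then u + 3 else u + 3 - k)" "w < k" unfolding w_def using u k
    by (auto simp: mod_if)
  have v: "Suc u mod k = (if Suc u = k then 0 else Suc u)" "Suc u mod k < k" using u by auto
  have "{u, w} \<notin> cyc_ext k" "{Suc u mod k, w} \<notin> cyc_ext k"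
    using u k False w v by (simp_all add: doubleton_in_cyc_ext_iff'[OF k2] split: if_splits; arith)+
  then have "{u, w} \<in> cyc_int k" "{Suc u mod k, w} \<in> cyc_int k"
    using u k w v by (auto intro!: doubleton_in_cyc_int split: if_splits)
  then show ?thesis
    using face_equiv_ears_of_chord[OF k] face_equiv_sym face_equiv_trans by metis
qed

lemma face_equiv_ear_0:
  assumes k: "4 \<le> k"
  shows "u < k \<Longrightarrow> face_equiv k (ear k 0) (ear k u)"
proof (induction u)
  case 0
  show ?case by (rule face_equiv_refl)
next
  case (Suc u)
  then have "face_equiv k (ear k u) (ear k (Suc u mod k))" by (intro face_equiv_ear_Suc[OF k]) simp
  then show ?case using Suc face_equiv_trans by simp
qed

lemma face_equiv_cyc_int:
  assumes k: "4 \<le> k" and f: "f \<in> cyc_int k" and g: "g \<in> cyc_int k"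
  shows "face_equiv k f g"
proof -
  have k2: "2 \<le> k" using k by simp
  obtain a v where f_eq: "f = {a, v}" using f unfolding cyc_int_def by blast
  obtain b w where g_eq: "g = {b, w}" using g unfolding cyc_int_def by blast
  have "face_equiv k f (ear k v)" using f face_equiv_chord_ear[OF k] unfolding f_eq by simp
  moreover have "face_equiv k (ear k v) (ear k w)"
    using face_equiv_ear_0[OF k] face_equiv_sym face_equiv_trans
      doubleton_in_cyc_intD(2)[OF f[unfolded f_eq] k2] doubleton_in_cyc_intD(2)[OF g[unfolded g_eq] k2]
    by metis
  moreover have "face_equiv k (ear k w) g"
    using g face_equiv_chord_ear[OF k] face_equiv_sym unfolding g_eq by simp
  ultimately show ?thesis using face_equiv_trans by blast
qed

lemma doubleton_0_2_in_cyc_int: "4 \<le> k \<Longrightarrow> {0, 2} \<in> cyc_int k"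
  by (intro doubleton_in_cyc_int) (auto simp: doubleton_in_cyc_ext_iff')

lemma affdim_tight_face:
  assumes k: "4 \<le> k"
  shows "affdim (tight_face k) = int (card (cyc_int k) - 1)"
proof -
  let ?F = "tight_face k"
  note g0 = doubleton_0_2_in_cyc_int[OF k]
  note fan = indicator_fan_in_tight_face[OF k]
  have "affdim ?F = int (dim (zero_sum_on (cyc_int k)))"
  proof (rule affdim_eq_dim[OF fan subspace_zero_sum_on])
    fix x assume x: "x \<in> ?F"
    then have "x - indicator (fan k) \<in> supported_on (cyc_int k)"
      using fan convex_hull_X_cyc_subset unfolding tight_face_def
      by (intro real_vector.subspace_diff[OF subspace_supported_on]) blast+
    moreover have "(\<Sum>f\<in>cyc_int k. (x - indicator (fan k)) f) = 0"
      using x fan unfolding tight_face_def by (simp add: sum_subtractf)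
    ultimately show "x - indicator (fan k) \<in> zero_sum_on (cyc_int k)" unfolding zero_sum_on_def by simp
  next
    show "zero_sum_on (cyc_int k) \<subseteq> span {x - y | x y. x \<in> ?F \<and> y \<in> ?F}"
      unfolding zero_sum_on_eq_span[OF finite_cyc_int g0]
      using face_equiv_cyc_int[OF k _ g0] unfolding face_equiv_def
      by (intro real_vector.span_minimal[OF _ real_vector.subspace_span]) auto
  qed
  then show ?thesis using dim_zero_sum_on[OF finite_cyc_int g0] by simp
qed

theorem proposition2:
  fixes k :: nat
  assumes "k \<ge> 4"
  shows "facet_defining (convex hull (X_cyc k)) (\<lambda>x. \<Sum>f\<in>cyc_int k. x f) (real (card (cyc_V k)) - 3)"
proof -
  have "card (cyc_V k) = k" by (simp add: cyc_V_def)
  then have face: "{x \<in> convex hull X_cyc k. (\<Sum>f\<in>cyc_int k. x f) = real (card (cyc_V k)) - 3}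
      = tight_face k"
    by (simp add: tight_face_def)
  have "card (cyc_int k) \<noteq> 0"
    using doubleton_0_2_in_cyc_int[OF assms] finite_cyc_int by auto
  then have "affdim (tight_face k) = affdim (convex hull X_cyc k) - 1"
    using affdim_tight_face[OF assms] affdim_convex_hull_X_cyc by simp
  moreover have "tight_face k \<noteq> {}" using indicator_fan_in_tight_face[OF assms] by blast
  moreover have "\<forall>x\<in>convex hull X_cyc k. real (card (cyc_V k)) - 3 \<le> (\<Sum>f\<in>cyc_int k. x f)"
    using convex_hull_X_cyc_sum_ge assms \<open>card (cyc_V k) = k\<close> by simp
  ultimately show ?thesis unfolding facet_defining_def face by blast
qed

end
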